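(* Let $n,k,b,t$ be positive integers with $k\le n$, let $V=\{1,\dots,n\}$, and let $Q_1,\dots,Q_t$ be arbitrary subsets of $V\times\{1,\dots,b\}$. For $1\le i\le t$ and $1\le\beta\le b$ put $Q_{i,\beta}=\{x\in V:(x,\beta)\in Q_i\}$. Let $\mathcal F_k^n$ denote the family of all $k$-element subsets of $V$. Then there exists a subfamily $\mathcal S\subseteq\mathcal F_k^n$ with $|\mathcal S|\ge |\mathcal F_k^n|/2^{bt}$ such that for any two sets $A,B\in\mathcal S$ and all $1\le i\le t$, $1\le\beta\le b$, the number $|A\cap Q_{i,\beta}|$ is odd if and only if $|B\cap Q_{i,\beta}|$ is odd.
   Context: Each $Q_i$ (a "query") is interpreted as the set of pairs (station $x$, channel $\beta$) such that station $x$ transmits on channel $\beta$ at time step $i$; a deterministic oblivious algorithm is represented by such a sequence $Q_1,\dots,Q_t$. *)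

theory Defs
  imports Complex_Main
begin

definition k_subsets :: "nat \<Rightarrow> nat \<Rightarrow> nat set set" where
  "k_subsets n k = {A. A \<subseteq> {1..n} \<and> card A = k}"

definition query_channel :: "(nat \<times> nat) set \<Rightarrow> nat \<Rightarrow> nat set" where
  "query_channel Qi \<beta> = {x. (x, \<beta>) \<in> Qi}"

end

theory Submission
  imports Defs
begin

text \<open>Record for each k-subset the set of pairs \<open>(i, \<beta>)\<close> at which its intersection with
  \<open>Q\<^sub>i\<^sub>,\<^sub>\<beta>\<close> is odd. There are only \<open>2^(bt)\<close> such parity patterns, so by pigeonhole
  some pattern is shared by at least a \<open>2^(-bt)\<close> fraction of all k-subsets.\<close>

lemma exists_large_fiber:
  assumes "finite F" "finite T" "f ` F \<subseteq> T" "T \<noteq> {}"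
  shows "\<exists>s. card F \<le> card {x\<in>F. f x = s} * card T"
proof (rule ccontr)
  assume "\<not> ?thesis"
  hence small: "\<And>s. card {x\<in>F. f x = s} * card T < card F" by (simp add: not_le)
  have "F = (\<Union>s\<in>T. {x\<in>F. f x = s})" using assms(3) by auto
  also have "card \<dots> = (\<Sum>s\<in>T. card {x\<in>F. f x = s})"
    by (rule card_UN_disjoint) (use assms in auto)
  finally have "card F = (\<Sum>s\<in>T. card {x\<in>F. f x = s})" .
  hence "card F * card T = (\<Sum>s\<in>T. card {x\<in>F. f x = s} * card T)"
    by (simp add: sum_distrib_right)
  also have "\<dots> < (\<Sum>s\<in>T. card F)"
    by (rule sum_strict_mono) (use assms small in auto)
  also have "\<dots> = card F * card T" by simp
  finally show False by simp
qed

lemma exists_large_uniform_subfamily: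
  fixes P :: "'i \<Rightarrow> 'a \<Rightarrow> bool"
  assumes "finite F" "finite I"
  obtains S where "S \<subseteq> F" "real (card F) / 2 ^ card I \<le> real (card S)"
    "\<And>A B p. A \<in> S \<Longrightarrow> B \<in> S \<Longrightarrow> p \<in> I \<Longrightarrow> P p A \<longleftrightarrow> P p B"
proof -
  define pattern where "pattern A = {p\<in>I. P p A}" for A
  have "pattern ` F \<subseteq> Pow I" unfolding pattern_def by auto
  from exists_large_fiber[OF assms(1) _ this] assms(2)
  obtain s where s: "card F \<le> card {A\<in>F. pattern A = s} * card (Pow I)" by auto
  define S where "S = {A\<in>F. pattern A = s}"
  have "card F \<le> card S * 2 ^ card I"
    using s unfolding S_def card_Pow[OF assms(2)] .
  hence "real (card F) \<le> real (card S) * 2 ^ card I"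
    by (metis of_nat_le_iff of_nat_mult of_nat_numeral of_nat_power)
  hence "real (card F) / 2 ^ card I \<le> real (card S)"
    by (simp add: divide_le_eq)
  moreover have "P p A \<longleftrightarrow> P p B" if "A \<in> S" "B \<in> S" "p \<in> I" for A B p
  proof -
    have "pattern A = pattern B" using that(1,2) unfolding S_def by simp
    then show ?thesis using that(3) unfolding pattern_def set_eq_iff by blast
  qed
  moreover have "S \<subseteq> F" unfolding S_def by simp
  ultimately show ?thesis using that by blast
qed

lemma finite_k_subsets: "finite (k_subsets n k)"
  unfolding k_subsets_def by (rule finite_subset[of _ "Pow {1..n}"]) auto

theorem lemma1:
  fixes n k b t :: nat and Q :: "nat \<Rightarrow> (nat \<times> nat) set"
  assumes "0 < n" "0 < k" "0 < b" "0 < t" "k \<le> n"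
    and "\<And>i. i \<in> {1..t} \<Longrightarrow> Q i \<subseteq> {1..n} \<times> {1..b}"
  shows "\<exists>S. S \<subseteq> k_subsets n k \<and>
           real (card S) \<ge> real (card (k_subsets n k)) / 2 ^ (b * t) \<and>
           (\<forall>A\<in>S. \<forall>B\<in>S. \<forall>i\<in>{1..t}. \<forall>\<beta>\<in>{1..b}.
              odd (card (A \<inter> query_channel (Q i) \<beta>)) \<longleftrightarrow>
              odd (card (B \<inter> query_channel (Q i) \<beta>)))"
proof -
  define parity where "parity p A \<longleftrightarrow> odd (card (A \<inter> query_channel (Q (fst p)) (snd p)))"
    for p :: "nat \<times> nat" and A :: "nat set"
  have finite_index: "finite ({1..t} \<times> {1..b})" by simp
  obtain S where sub: "S \<subseteq> k_subsets n k"
      and large: "real (card (k_subsets n k)) / 2 ^ card ({1..t} \<times> {1..b}) \<le> real (card S)"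
      and agree: "\<And>A B p. A \<in> S \<Longrightarrow> B \<in> S \<Longrightarrow> p \<in> {1..t} \<times> {1..b} \<Longrightarrow>
                    parity p A \<longleftrightarrow> parity p B"
    using exists_large_uniform_subfamily[OF finite_k_subsets[of n k] finite_index, where P = parity]
    by blast
  have "card ({1..t} \<times> {1..b}) = b * t" by (simp add: card_cartesian_product)
  with large have "real (card (k_subsets n k)) / 2 ^ (b * t) \<le> real (card S)" by (simp add: mult.commute)
  moreover have "odd (card (A \<inter> query_channel (Q i) \<beta>)) \<longleftrightarrow> odd (card (B \<inter> query_channel (Q i) \<beta>))"
    if "A \<in> S" "B \<in> S" "i \<in> {1..t}" "\<beta> \<in> {1..b}" for A B i \<beta>
    using agree[of A B "(i, \<beta>)"] that unfolding parity_def by simp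
  ultimately show ?thesis using sub by blast
qed

end
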